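(* Let $\varepsilon\in(0,1)$, $\alpha\in(0,\tfrac12)$, $T>0$ and $p\in[0,2)$. Suppose $X$ is a fixed value in $[(1-\alpha)T,(1+\alpha)T]$, and suppose we have access to $T$ and to independent random variables $Y_1,\dots,Y_N$ with $\mathbb{E}[Y_j]=X$ and $\mathrm{Var}[Y_j]\le T^2/4$ for all $j$, where $N=O(\log^2\frac1\varepsilon)$. Then one can construct an estimator $\hat{Q}$ (a function of $T$ and $Y_1,\dots,Y_N$) of $X^p$ with $|\mathbb{E}[\hat{Q}]-X^p|\le\varepsilon^{10}T^p$ and $\mathrm{Var}[\hat{Q}]=O(T^{2p}\log(1/\varepsilon))$. *)

theory Defs
  imports "HOL-Probability.Probability"
begin

end

theory Submission imports Defs begin

text \<open>Write \<open>X = T (1 + u)\<close> with \<open>\<bar>u\<bar> \<le> \<alpha> < 1/2\<close> and expand \<open>X powr p = T powr p * (\<Sum>k. (p gchoose k) u^k)\<close>;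
  for \<open>0 \<le> p < 2\<close> the coefficients are bounded by 2. The normalised samples \<open>Z\<^sub>j = Y\<^sub>j / T - 1\<close> are
  independent with mean \<open>u\<close>, so \<open>\<Prod>j<k. Z\<^sub>j\<close> is an unbiased estimator of \<open>u^k\<close>, and truncating the
  series after \<open>n = O(log (1/\<epsilon>))\<close> terms leaves a bias \<open>O(2^-n)\<close>. Since moreover
  \<open>E[Z\<^sub>j\<^sup>2] = (Var Y\<^sub>j + (X - T)\<^sup>2) / T\<^sup>2 \<le> 1/2\<close>, the \<open>k\<close>-th term has second moment \<open>O(2^-k)\<close>, and
  Cauchy-Schwarz over the \<open>n\<close> terms bounds the variance by \<open>O(n)\<close>. Thus already \<open>N = O(log (1/\<epsilon>))\<close>
  samples suffice.\<close>

lemma abs_gchoose_le_2: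
  fixes p :: real
  assumes "-1 \<le> p" "p \<le> 2"
  shows "\<bar>p gchoose k\<bar> \<le> 2"
proof -
  have step: "\<bar>p gchoose Suc k\<bar> = \<bar>p gchoose k\<bar> * (\<bar>p - k\<bar> / (k + 1))" for k
  proof -
    have "(k + 1) * (p gchoose Suc k) = (p - k) * (p gchoose k)"
      using gbinomial_mult_1[of p k] by (simp add: algebra_simps)
    then have "p gchoose Suc k = (p gchoose k) * ((p - k) / (k + 1))"
      by (simp add: field_simps)
    then show ?thesis by (simp add: abs_mult)
  qed
  have "\<bar>p gchoose Suc k\<bar> \<le> 2" for k
  proof (induction k)
    case 0
    then show ?case using step[of 0] assms by simp
  next
    case (Suc k)
    have "\<bar>p - Suc k\<bar> / (Suc k + 1) \<le> 1"
      using assms by (simp add: divide_le_eq_1)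
    then have "\<bar>p gchoose Suc (Suc k)\<bar> \<le> \<bar>p gchoose Suc k\<bar>"
      unfolding step[of "Suc k"] by (rule mult_left_le) simp
    with Suc.IH show ?case by linarith
  qed
  then show ?thesis by (cases k) auto
qed

lemma sum_gchoose_sq_half_powers_le:
  fixes p :: real
  assumes "-1 \<le> p" "p \<le> 2"
  shows "(\<Sum>k<n. (p gchoose k)^2 * (1/2) ^ k) \<le> 8"
proof -
  have "(\<Sum>k<n. (p gchoose k)^2 * (1/2) ^ k) \<le> (\<Sum>k<n. 4 * (1/2::real) ^ k)"
  proof (intro sum_mono mult_right_mono)
    fix k
    show "(p gchoose k)^2 \<le> 4"
      using abs_le_square_iff[of "p gchoose k" 2] abs_gchoose_le_2[OF assms] by simp
  qed simp
  also have "\<dots> = 8 * (1 - (1/2) ^ n)"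
    using geometric_sum[of "1/2::real" n] by (simp add: sum_distrib_left[symmetric])
  also have "\<dots> \<le> 8" by simp
  finally show ?thesis .
qed

lemma abs_sums_minus_partial_sum_le:
  fixes c :: "nat \<Rightarrow> real"
  assumes sums: "(\<lambda>k. c k * u ^ k) sums S" and u: "\<bar>u\<bar> < 1" and c: "\<And>k. \<bar>c k\<bar> \<le> B"
  shows "\<bar>S - (\<Sum>k<n. c k * u ^ k)\<bar> \<le> B * \<bar>u\<bar> ^ n / (1 - \<bar>u\<bar>)"
proof -
  define tail where "tail = (\<lambda>i. c (i + n) * u ^ (i + n))"
  define bound where "bound = (\<lambda>i. B * \<bar>u\<bar> ^ n * \<bar>u\<bar> ^ i)"
  have tail_sums: "tail sums (S - (\<Sum>k<n. c k * u ^ k))"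
    unfolding tail_def using sums_split_initial_segment[OF sums] .
  have bound_sums: "bound sums (B * \<bar>u\<bar> ^ n * (1 / (1 - \<bar>u\<bar>)))"
    unfolding bound_def using u by (intro sums_mult geometric_sums) simp
  have tail_le: "\<bar>tail i\<bar> \<le> bound i" for i
  proof -
    have "\<bar>tail i\<bar> = \<bar>c (i + n)\<bar> * \<bar>u\<bar> ^ (i + n)"
      unfolding tail_def by (simp add: abs_mult power_abs)
    also have "\<dots> \<le> B * \<bar>u\<bar> ^ (i + n)"
      using c by (rule mult_right_mono) simp
    finally show ?thesis
      unfolding bound_def by (simp add: power_add mult_ac)
  qed
  have "summable bound"
    using bound_sums by (rule sums_summable)
  then have "summable (\<lambda>i. \<bar>tail i\<bar>)"
    by (rule summable_comparison_test'[where N = 0]) (simp add: tail_le)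
  then have "\<bar>suminf tail\<bar> \<le> (\<Sum>i. \<bar>tail i\<bar>)"
    using summable_norm[of tail] by simp
  also have "\<dots> \<le> suminf bound"
    using tail_le bound_sums \<open>summable (\<lambda>i. \<bar>tail i\<bar>)\<close> by (intro suminf_le) (auto simp: sums_iff)
  finally show ?thesis
    using tail_sums bound_sums by (simp add: sums_iff)
qed

lemma abs_binomial_series_truncation_le:
  fixes p u :: real
  assumes "0 \<le> p" "p < 2" "\<bar>u\<bar> \<le> 1/2"
  shows "\<bar>(1 + u) powr p - (\<Sum>k<n. (p gchoose k) * u ^ k)\<bar> \<le> 4 * (1/2) ^ n"
proof -
  have "\<bar>(1 + u) powr p - (\<Sum>k<n. (p gchoose k) * u ^ k)\<bar> \<le> 2 * \<bar>u\<bar> ^ n / (1 - \<bar>u\<bar>)"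
    using assms gen_binomial_real[of u p]
    by (intro abs_sums_minus_partial_sum_le abs_gchoose_le_2) auto
  also have "\<dots> \<le> 2 * (1/2) ^ n / (1/2)"
    using assms by (intro frac_le mult_left_mono power_mono) auto
  finally show ?thesis by simp
qed

lemma number_of_terms_bounds:
  fixes \<epsilon> :: real
  assumes "0 < \<epsilon>" "\<epsilon> < 1"
  defines "n \<equiv> nat \<lceil>10 * log 2 (1/\<epsilon>)\<rceil> + 2"
  shows "real n \<le> 15 * (1 + ln (1/\<epsilon>))" and "4 * (1/2) ^ n \<le> \<epsilon> ^ 10"
proof -
  define a where "a = 10 * log 2 (1/\<epsilon>)"
  have "0 \<le> a" unfolding a_def using assms by simp
  then have n_eq: "real n = of_int \<lceil>a\<rceil> + 2" unfolding n_def a_def by simp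
  have "a = 10 * (ln (1/\<epsilon>) / ln 2)" unfolding a_def log_def by simp
  also have "\<dots> \<le> 10 * (ln (1/\<epsilon>) / (2/3))"
    using ln2_ge_two_thirds assms by (intro mult_left_mono divide_left_mono) auto
  finally have "a \<le> 15 * ln (1/\<epsilon>)" by simp
  then show "real n \<le> 15 * (1 + ln (1/\<epsilon>))"
    unfolding distrib_left using n_eq of_int_ceiling_le_add_one[of a] by linarith
  have "4 * (1/\<epsilon>) ^ 10 = 4 * ((2::real) powr log 2 (1/\<epsilon>)) powr 10"
    using assms by (simp add: powr_realpow)
  also have "\<dots> = 2 powr (a + 2)"
    unfolding a_def by (simp add: powr_add powr_powr mult.commute)
  also have "\<dots> \<le> 2 powr real n"
    using n_eq by (intro powr_mono) auto
  also have "\<dots> = 2 ^ n" by (simp add: powr_realpow)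
  finally show "4 * (1/2) ^ n \<le> \<epsilon> ^ 10"
    using assms by (simp add: field_simps power_one_over)
qed

definition binomial_estimator :: "real \<Rightarrow> real \<Rightarrow> nat \<Rightarrow> real list \<Rightarrow> real" where
  "binomial_estimator p T n ys = T powr p * (\<Sum>k<n. (p gchoose k) * (\<Prod>j<k. ys ! j / T - 1))"

context prob_space
begin

lemma expectation_sq_minus_const:
  fixes Y :: "'a \<Rightarrow> real"
  assumes "integrable M Y" "integrable M (\<lambda>\<omega>. (Y \<omega>)^2)"
  shows "integrable M (\<lambda>\<omega>. (Y \<omega> - c)^2)"
    and "expectation (\<lambda>\<omega>. (Y \<omega> - c)^2) = variance Y + (expectation Y - c)^2"
proof -
  have expand: "(\<lambda>\<omega>. (Y \<omega> - c)^2) = (\<lambda>\<omega>. (Y \<omega>)^2 - 2 * c * Y \<omega> + c^2)"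
    by (simp add: power2_diff algebra_simps)
  show "integrable M (\<lambda>\<omega>. (Y \<omega> - c)^2)"
    unfolding expand using assms by auto
  show "expectation (\<lambda>\<omega>. (Y \<omega> - c)^2) = variance Y + (expectation Y - c)^2"
    unfolding expand using assms variance_eq[OF assms] prob_space by (simp add: power2_diff)
qed

lemma expectation_sum_indep_prods:
  fixes Z :: "nat \<Rightarrow> 'a \<Rightarrow> real"
  assumes indep: "indep_vars (\<lambda>_. borel) Z {..<n}"
    and integrable: "\<And>j. j < n \<Longrightarrow> integrable M (Z j)"
    and mean: "\<And>j. j < n \<Longrightarrow> expectation (Z j) = u"
  shows "integrable M (\<lambda>\<omega>. \<Sum>k<n. c k * (\<Prod>j<k. Z j \<omega>))"
    and "expectation (\<lambda>\<omega>. \<Sum>k<n. c k * (\<Prod>j<k. Z j \<omega>)) = (\<Sum>k<n. c k * u ^ k)"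
proof -
  have indep_k: "indep_vars (\<lambda>_. borel) Z {..<k}" if "k \<le> n" for k
    using indep_vars_subset[OF indep] that by auto
  have prod_integrable: "integrable M (\<lambda>\<omega>. \<Prod>j<k. Z j \<omega>)" if "k \<le> n" for k
    using indep_vars_integrable[OF _ indep_k[OF that]] integrable that by auto
  have prod_expectation: "expectation (\<lambda>\<omega>. \<Prod>j<k. Z j \<omega>) = u ^ k" if "k \<le> n" for k
    using indep_vars_lebesgue_integral[OF _ indep_k[OF that]] integrable mean that by auto
  show "integrable M (\<lambda>\<omega>. \<Sum>k<n. c k * (\<Prod>j<k. Z j \<omega>))"
    using prod_integrable by auto
  show "expectation (\<lambda>\<omega>. \<Sum>k<n. c k * (\<Prod>j<k. Z j \<omega>)) = (\<Sum>k<n. c k * u ^ k)"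
    using prod_integrable prod_expectation by (simp add: Bochner_Integration.integral_sum)
qed

lemma expectation_prod_sq_indep_le:
  fixes Z :: "'i \<Rightarrow> 'a \<Rightarrow> real"
  assumes indep: "indep_vars (\<lambda>_. borel) Z I" and "finite I"
    and integrable_sq: "\<And>i. i \<in> I \<Longrightarrow> integrable M (\<lambda>\<omega>. (Z i \<omega>)^2)"
    and second_moment: "\<And>i. i \<in> I \<Longrightarrow> expectation (\<lambda>\<omega>. (Z i \<omega>)^2) \<le> s"
  shows "integrable M (\<lambda>\<omega>. \<Prod>i\<in>I. (Z i \<omega>)^2)"
    and "expectation (\<lambda>\<omega>. \<Prod>i\<in>I. (Z i \<omega>)^2) \<le> s ^ card I"
proof -
  have indep_sq: "indep_vars (\<lambda>_. borel) (\<lambda>i \<omega>. (Z i \<omega>)^2) I"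
    by (rule indep_vars_compose2[OF indep]) auto
  show "integrable M (\<lambda>\<omega>. \<Prod>i\<in>I. (Z i \<omega>)^2)"
    using indep_vars_integrable[OF \<open>finite I\<close> indep_sq] integrable_sq by auto
  have "expectation (\<lambda>\<omega>. \<Prod>i\<in>I. (Z i \<omega>)^2) = (\<Prod>i\<in>I. expectation (\<lambda>\<omega>. (Z i \<omega>)^2))"
    using indep_vars_lebesgue_integral[OF \<open>finite I\<close> indep_sq] integrable_sq by auto
  also have "\<dots> \<le> (\<Prod>i\<in>I. s)"
    using second_moment by (intro prod_mono) auto
  finally show "expectation (\<lambda>\<omega>. \<Prod>i\<in>I. (Z i \<omega>)^2) \<le> s ^ card I"
    by simp
qed

lemma second_moment_sum_indep_prods_le:
  fixes Z :: "nat \<Rightarrow> 'a \<Rightarrow> real"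
  assumes indep: "indep_vars (\<lambda>_. borel) Z {..<n}"
    and integrable: "\<And>j. j < n \<Longrightarrow> integrable M (Z j)"
    and integrable_sq: "\<And>j. j < n \<Longrightarrow> integrable M (\<lambda>\<omega>. (Z j \<omega>)^2)"
    and second_moment: "\<And>j. j < n \<Longrightarrow> expectation (\<lambda>\<omega>. (Z j \<omega>)^2) \<le> s"
  shows "integrable M (\<lambda>\<omega>. (\<Sum>k<n. c k * (\<Prod>j<k. Z j \<omega>))^2)"
    and "expectation (\<lambda>\<omega>. (\<Sum>k<n. c k * (\<Prod>j<k. Z j \<omega>))^2) \<le> n * (\<Sum>k<n. (c k)^2 * s ^ k)"
proof -
  define Q where "Q = (\<lambda>\<omega>. \<Sum>k<n. c k * (\<Prod>j<k. Z j \<omega>))"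
  define B where "B = (\<lambda>\<omega>. n * (\<Sum>k<n. (c k)^2 * (\<Prod>j<k. (Z j \<omega>)^2)))"
  have prod_sq_integrable: "integrable M (\<lambda>\<omega>. \<Prod>j<k. (Z j \<omega>)^2)"
    and prod_sq_expectation: "expectation (\<lambda>\<omega>. \<Prod>j<k. (Z j \<omega>)^2) \<le> s ^ k" if "k \<le> n" for k
    using expectation_prod_sq_indep_le[OF indep_vars_subset[OF indep], of "{..<k}" s]
      integrable_sq second_moment that
    by auto
  have B_integrable: "integrable M B"
    unfolding B_def using prod_sq_integrable by auto
  have Q_le_B: "(Q \<omega>)^2 \<le> B \<omega>" for \<omega>
  proof -
    have "(Q \<omega>)^2 \<le> (\<Sum>k<n. (c k * (\<Prod>j<k. Z j \<omega>))^2) * card {..<n}"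
      unfolding Q_def by (rule sum_squared_le_sum_of_squares)
    then show ?thesis
      unfolding B_def by (simp add: power_mult_distrib prod_power_distrib mult.commute)
  qed
  have "Q \<in> borel_measurable M"
    unfolding Q_def using integrable by auto
  moreover have "norm ((Q \<omega>)^2) \<le> norm (B \<omega>)" for \<omega>
    using Q_le_B[of \<omega>] by simp
  ultimately show Q_sq_integrable: "integrable M (\<lambda>\<omega>. (Q \<omega>)^2)"
    by (intro Bochner_Integration.integrable_bound[OF B_integrable] AE_I2) auto
  have "expectation (\<lambda>\<omega>. (Q \<omega>)^2) \<le> expectation B"
    using Q_sq_integrable B_integrable Q_le_B by (rule integral_mono)
  also have "\<dots> = n * (\<Sum>k<n. (c k)^2 * expectation (\<lambda>\<omega>. \<Prod>j<k. (Z j \<omega>)^2))"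
    unfolding B_def using prod_sq_integrable by (simp add: Bochner_Integration.integral_sum)
  also have "\<dots> \<le> n * (\<Sum>k<n. (c k)^2 * s ^ k)"
    using prod_sq_expectation by (intro mult_left_mono sum_mono mult_left_mono) auto
  finally show "expectation (\<lambda>\<omega>. Q \<omega>^2) \<le> n * (\<Sum>k<n. (c k)^2 * s ^ k)" .
qed

lemma normalized_sample_moments:
  fixes Y :: "'a \<Rightarrow> real"
  assumes T: "0 < T" and close: "\<bar>X - T\<bar> \<le> T / 2"
    and integrable: "integrable M Y" "integrable M (\<lambda>\<omega>. (Y \<omega>)^2)"
    and mean: "expectation Y = X" and var: "variance Y \<le> T^2 / 4"
  shows "integrable M (\<lambda>\<omega>. Y \<omega> / T - 1)"
    and "integrable M (\<lambda>\<omega>. (Y \<omega> / T - 1)^2)"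
    and "expectation (\<lambda>\<omega>. Y \<omega> / T - 1) = X / T - 1"
    and "expectation (\<lambda>\<omega>. (Y \<omega> / T - 1)^2) \<le> 1/2"
proof -
  have sq_eq: "(\<lambda>\<omega>. (Y \<omega> / T - 1)^2) = (\<lambda>\<omega>. (Y \<omega> - T)^2 / T^2)"
    using T by (simp add: diff_divide_distrib power_divide[symmetric])
  show "integrable M (\<lambda>\<omega>. Y \<omega> / T - 1)"
    using integrable by auto
  show "integrable M (\<lambda>\<omega>. (Y \<omega> / T - 1)^2)"
    unfolding sq_eq using expectation_sq_minus_const(1)[OF integrable] by auto
  show "expectation (\<lambda>\<omega>. Y \<omega> / T - 1) = X / T - 1"
    using integrable mean prob_space by simp
  have "(X - T)^2 \<le> (T / 2)^2"
    using close abs_le_square_iff[of "X - T" "T / 2"] T by simp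
  then have "variance Y + (X - T)^2 \<le> T^2 / 2"
    using var by (simp add: power_divide)
  then show "expectation (\<lambda>\<omega>. (Y \<omega> / T - 1)^2) \<le> 1/2"
    unfolding sq_eq using expectation_sq_minus_const(2)[OF integrable, of T] mean T
    by (simp add: divide_le_eq)
qed

lemma binomial_estimator_bias_variance:
  fixes Y :: "nat \<Rightarrow> 'a \<Rightarrow> real"
  assumes T: "0 < T" and p: "0 \<le> p" "p < 2" and close: "\<bar>X - T\<bar> \<le> T / 2"
    and indep: "indep_vars (\<lambda>_. borel) Y {..<n}"
    and integrable: "\<And>j. j < n \<Longrightarrow> integrable M (Y j)"
    and integrable_sq: "\<And>j. j < n \<Longrightarrow> integrable M (\<lambda>\<omega>. (Y j \<omega>)^2)"
    and mean: "\<And>j. j < n \<Longrightarrow> expectation (Y j) = X"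
    and var: "\<And>j. j < n \<Longrightarrow> variance (Y j) \<le> T^2 / 4"
  defines "Q \<equiv> \<lambda>\<omega>. binomial_estimator p T n (map (\<lambda>j. Y j \<omega>) [0..<n])"
  shows "integrable M Q" and "integrable M (\<lambda>\<omega>. (Q \<omega>)^2)"
    and "\<bar>expectation Q - X powr p\<bar> \<le> 4 * (1/2) ^ n * T powr p"
    and "variance Q \<le> 8 * n * T powr (2 * p)"
proof -
  define Z where "Z = (\<lambda>j \<omega>. Y j \<omega> / T - 1)"
  define u where "u = X / T - 1"
  define S where "S = (\<lambda>\<omega>. \<Sum>k<n. (p gchoose k) * (\<Prod>j<k. Z j \<omega>))"
  have Q_eq: "Q = (\<lambda>\<omega>. T powr p * S \<omega>)"
    unfolding Q_def S_def Z_def binomial_estimator_def by (auto intro!: sum.cong prod.cong)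
  have Z_integrable: "integrable M (Z j)"
    and Z_sq_integrable: "integrable M (\<lambda>\<omega>. (Z j \<omega>)^2)"
    and Z_mean: "expectation (Z j) = u"
    and Z_sq_mean: "expectation (\<lambda>\<omega>. (Z j \<omega>)^2) \<le> 1/2" if "j < n" for j
    using normalized_sample_moments[OF T close integrable[OF that] integrable_sq[OF that]
        mean[OF that] var[OF that]]
    unfolding Z_def u_def by auto
  have indep_Z: "indep_vars (\<lambda>_. borel) Z {..<n}"
    unfolding Z_def by (rule indep_vars_compose2[OF indep]) auto
  have S_integrable: "integrable M S" and S_mean: "expectation S = (\<Sum>k<n. (p gchoose k) * u ^ k)"
    unfolding S_def using expectation_sum_indep_prods[OF indep_Z Z_integrable Z_mean] by auto
  have S_sq_integrable: "integrable M (\<lambda>\<omega>. (S \<omega>)^2)"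
    and S_sq_mean: "expectation (\<lambda>\<omega>. (S \<omega>)^2) \<le> n * (\<Sum>k<n. (p gchoose k)^2 * (1/2) ^ k)"
    unfolding S_def
    using second_moment_sum_indep_prods_le[OF indep_Z Z_integrable Z_sq_integrable Z_sq_mean]
    by auto
  show Q_integrable: "integrable M Q"
    unfolding Q_eq using S_integrable by simp
  have "(T powr p)^2 = T powr (2 * p)"
    by (simp add: power2_eq_square powr_add[symmetric])
  then have Q_sq_eq: "(\<lambda>\<omega>. (Q \<omega>)^2) = (\<lambda>\<omega>. T powr (2 * p) * (S \<omega>)^2)"
    unfolding Q_eq by (simp add: power_mult_distrib)
  show Q_sq_integrable: "integrable M (\<lambda>\<omega>. (Q \<omega>)^2)"
    unfolding Q_sq_eq using S_sq_integrable by simp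
  have "\<bar>u\<bar> \<le> 1/2"
    using close T unfolding u_def by (simp add: abs_le_iff field_simps)
  then have bias: "\<bar>(1 + u) powr p - expectation S\<bar> \<le> 4 * (1/2) ^ n"
    unfolding S_mean using p by (rule abs_binomial_series_truncation_le[rotated 2])
  have "X powr p = T powr p * (1 + u) powr p"
    using T unfolding u_def by (simp add: powr_mult[symmetric])
  then have "expectation Q - X powr p = T powr p * (expectation S - (1 + u) powr p)"
    unfolding Q_eq by (simp add: algebra_simps)
  then have "\<bar>expectation Q - X powr p\<bar> = T powr p * \<bar>(1 + u) powr p - expectation S\<bar>"
    by (simp add: abs_mult abs_minus_commute[of "expectation S"])
  also have "\<dots> \<le> T powr p * (4 * (1/2) ^ n)"
    using bias by (rule mult_left_mono) simp
  finally show "\<bar>expectation Q - X powr p\<bar> \<le> 4 * (1/2) ^ n * T powr p"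
    by (simp add: mult_ac)
  have "variance Q \<le> expectation (\<lambda>\<omega>. (Q \<omega>)^2)"
    using variance_eq[OF Q_integrable Q_sq_integrable] by simp
  also have "\<dots> = T powr (2 * p) * expectation (\<lambda>\<omega>. (S \<omega>)^2)"
    unfolding Q_sq_eq by simp
  also have "\<dots> \<le> T powr (2 * p) * (real n * 8)"
  proof (rule mult_left_mono)
    have "n * (\<Sum>k<n. (p gchoose k)^2 * (1/2) ^ k) \<le> real n * 8"
      using sum_gchoose_sq_half_powers_le[of p n] p by (intro mult_left_mono) auto
    then show "expectation (\<lambda>\<omega>. (S \<omega>)^2) \<le> real n * 8"
      using S_sq_mean by linarith
  qed simp
  finally show "variance Q \<le> 8 * n * T powr (2 * p)"
    by (simp add: mult_ac)
qed

end

theorem mainTheorem20: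
  "\<exists>C::real. C > 0 \<and>
    (\<forall>(\<epsilon>::real) (\<alpha>::real) (T::real) (p::real).
       0 < \<epsilon> \<and> \<epsilon> < 1 \<and> 0 < \<alpha> \<and> \<alpha> < 1/2 \<and> 0 < T \<and> 0 \<le> p \<and> p < 2 \<longrightarrow>
       (\<exists>(N::nat) (Qhat :: real list \<Rightarrow> real).
          real N \<le> C * (1 + ln (1/\<epsilon>))^2 \<and>
          (\<forall>(X::real) (M::'a measure) (Y::nat \<Rightarrow> 'a \<Rightarrow> real).
             (1 - \<alpha>) * T \<le> X \<and> X \<le> (1 + \<alpha>) * T \<and>
             prob_space M \<and>
             prob_space.indep_vars M (\<lambda>_. borel) Y {..<N} \<and>
             (\<forall>j<N. integrable M (Y j) \<and> integrable M (\<lambda>\<omega>. (Y j \<omega>)^2) \<and>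
                     prob_space.expectation M (Y j) = X \<and>
                     prob_space.variance M (Y j) \<le> T^2 / 4)
             \<longrightarrow>
             (let Q = (\<lambda>\<omega>. Qhat (map (\<lambda>j. Y j \<omega>) [0..<N])) in
                integrable M Q \<and> integrable M (\<lambda>\<omega>. (Q \<omega>)^2) \<and>
                \<bar>prob_space.expectation M Q - X powr p\<bar> \<le> \<epsilon>^10 * T powr p \<and>
                prob_space.variance M Q \<le> C * T powr (2*p) * (1 + ln (1/\<epsilon>))))))"
proof (rule exI[of _ "120::real"], intro conjI allI impI, goal_cases)
  case (2 \<epsilon> \<alpha> T p)
  then have \<epsilon>: "0 < \<epsilon>" "\<epsilon> < 1" and \<alpha>: "\<alpha> < 1/2" and T: "0 < T" and p: "0 \<le> p" "p < 2"
    by auto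
  define L where "L = 1 + ln (1/\<epsilon>)"
  obtain n :: nat where n_le: "real n \<le> 15 * L" and tail_le: "4 * (1/2) ^ n \<le> \<epsilon> ^ 10"
    using number_of_terms_bounds[OF \<epsilon>] unfolding L_def by blast
  show ?case
  proof (intro exI[of _ n] exI[of _ "binomial_estimator p T n"] conjI allI impI, goal_cases)
    case 1
    have "1 \<le> L"
      using \<epsilon> unfolding L_def by simp
    then have "15 * L \<le> 120 * L^2"
      by (simp add: power2_eq_square)
    then show ?case
      using n_le unfolding L_def by linarith
  next
    case (2 X M Y)
    then interpret prob_space M by simp
    have "\<bar>X - T\<bar> \<le> \<alpha> * T"
      using 2 by (auto simp: abs_le_iff algebra_simps)
    also have "\<dots> \<le> T / 2"
      using \<alpha> T by simp
    finally have close: "\<bar>X - T\<bar> \<le> T / 2" .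
    have indep: "indep_vars (\<lambda>_. borel) Y {..<n}"
      using 2 by simp
    have "integrable M (Y j)" "integrable M (\<lambda>\<omega>. (Y j \<omega>)^2)"
      "expectation (Y j) = X" "variance (Y j) \<le> T^2 / 4" if "j < n" for j
      using 2 that by auto
    note estimator = binomial_estimator_bias_variance[OF T p close indep this]
    have "4 * (1/2) ^ n * T powr p \<le> \<epsilon> ^ 10 * T powr p"
      using tail_le by (rule mult_right_mono) simp
    moreover have "8 * n * T powr (2 * p) \<le> 120 * L * T powr (2 * p)"
      using n_le by (intro mult_right_mono) auto
    ultimately show ?case
      using estimator unfolding Let_def L_def[symmetric] by (simp add: mult_ac)
  qed
qed simp

end
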